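(* Let $\alpha,\beta$ be words over $X$ such that $\alpha\beta$ has no repeated letters, $|\alpha|$ is even, and $|\beta|=2n$ with $n\ge1$. Then $$f[\alpha]\,f[\alpha\beta]^{\,n-1}=\sum s(\beta,x_1y_1\ldots x_ny_n)\,f[(\alpha\beta)\setminus x_1y_1]\,f[(\alpha\beta)\setminus x_2y_2]\cdots f[(\alpha\beta)\setminus x_ny_n].$$ The sum is over all perfect matchings $\{x_1,y_1\},\ldots,\{x_n,y_n\}$ of the set of letters of $\beta$, each matching counted once.
   Context: Setting. Let $X$ be a set and $R$ a commutative ring. Let $f$ assign to each ordered pair $(x,y)\in X\times X$ an element $f[xy]\in R$, subject to $f[xy]=-f[yx]$ and $f[xx]=0$ for all $x,y\in X$. Words. A word is a finite sequence of elements (letters) of $X$. Concatenation is written by juxtaposition, $\epsilon$ is the empty word, and $|\alpha|$ is the length of $\alpha$. For words $\alpha,\beta$, the word $\alpha\setminus\beta$ is obtained from $\alpha$ by deleting every letter that occurs in $\beta$. Sign. For words $\alpha,\beta$, set $s(\alpha,\beta)=0$ if $\alpha$ or $\beta$ has a repeated letter, or if $\beta$ contains a letter not in $\alpha$. Otherwise $s(\alpha,\beta)\in\{\pm1\}$ is the sign of the permutation that rearranges $\alpha$ into the word $\beta(\alpha\setminus\beta)$. Pfaffian. Let $\alpha=x_1\ldots x_{2n}$ be a word with distinct letters. Then $$f[\alpha]=\sum s(\alpha,y_1\ldots y_{2n})\,f[y_1y_2]\cdots f[y_{2n-1}y_{2n}],$$ where the sum is over the $(2n-1)(2n-3)\cdots1$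 partitions of $\{x_1,\ldots,x_{2n}\}$ into pairs $\{y_1,y_2\},\ldots,\{y_{2n-1},y_{2n}\}$. Each term does not depend on the order in which the pairs or their elements are listed. Further conventions: $f[\epsilon]=1$; $f[\alpha]=0$ if $\alpha$ has a repeated letter; and $f[\alpha]=0$ if $|\alpha|$ is odd. *)

theory Defs
  imports "HOL-Combinatorics.Permutations"
begin

definition wminus :: "'a list \<Rightarrow> 'a list \<Rightarrow> 'a list" where
  "wminus \<alpha> \<beta> = filter (\<lambda>c. c \<notin> set \<beta>) \<alpha>"

definition wsign :: "'a list \<Rightarrow> 'a list \<Rightarrow> 'r::comm_ring_1" where
  "wsign \<alpha> \<beta> =
     (if \<not> distinct \<alpha> \<or> \<not> distinct \<beta> \<or> \<not> set \<beta> \<subseteq> set \<alpha> then 0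
      else of_int (sign (THE p. p permutes {..<length \<alpha>} \<and>
                               permute_list p \<alpha> = \<beta> @ wminus \<alpha> \<beta>)))"

definition perfect_matchings :: "'a set \<Rightarrow> 'a set set set" where
  "perfect_matchings S = {M. (\<forall>e\<in>M. card e = 2) \<and> \<Union>M = S \<and>
                             (\<forall>e\<in>M. \<forall>e'\<in>M. e \<noteq> e' \<longrightarrow> e \<inter> e' = {})}"

definition precedes :: "'a list \<Rightarrow> 'a \<Rightarrow> 'a \<Rightarrow> bool" where
  "precedes w x y \<longleftrightarrow> (\<exists>i j. i < j \<and> j < length w \<and> w ! i = x \<and> w ! j = y)"

definition listing :: "'a list \<Rightarrow> 'a set set \<Rightarrow> ('a \<times> 'a) list" where
  "listing w M = (SOME ps. distinct ps \<and> set (map (\<lambda>(x,y). {x,y}) ps) = M \<and>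
                           (\<forall>(x,y)\<in>set ps. precedes w x y))"

definition flat :: "('a \<times> 'a) list \<Rightarrow> 'a list" where
  "flat ps = concat (map (\<lambda>(x,y). [x,y]) ps)"

definition pf :: "('a \<Rightarrow> 'a \<Rightarrow> 'r::comm_ring_1) \<Rightarrow> 'a list \<Rightarrow> 'r" where
  "pf f \<alpha> =
     (if \<alpha> = [] then 1
      else if \<not> distinct \<alpha> \<or> odd (length \<alpha>) then 0
      else (\<Sum>M\<in>perfect_matchings (set \<alpha>).
              wsign \<alpha> (flat (listing \<alpha> M)) *
              prod_list (map (\<lambda>(x,y). f x y) (listing \<alpha> M))))"

end

theory Submission
  imports Defs
begin

(* Work with the Pfaffian pf_rec defined by expansion along the first letter, which agrees with
   the matching sum pf on words without repeated letters.  For skew f it is alternating in any two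
   adjacent letters, so it vanishes on words with a repeated letter and picks up (-1)^i when the
   letter at position i is moved to the front.

   The key quadratic identity is the antisymmetry of
     exchange_sum u v = sum_i (-1)^i pf(u without u_i) pf(u_i v),
   proved by induction on u.  Let C = alpha beta and beta = b B.  For u = C without the letters
   of B and v = C without b, a repeated letter kills every term of exchange_sum u v except the
   one removing b, and every term of exchange_sum v u except those removing a letter B_j; this
   gives
     sum_j (-1)^j pf(C without b, B_j) pf(C without B_i for i ~= j) = pf(alpha) pf(C).
   The right-hand side of the theorem is the Pfaffian over beta of the skew form
   (x, y) |-> pf(C without x, y); expanding it along b and applying induction on n to the
   sub-words of beta yields pf(alpha) pf(C)^(n-1). *)

section \<open>Words\<close>

definition remove_nth :: "nat \<Rightarrow> 'a list \<Rightarrow> 'a list" where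
  "remove_nth i w = take i w @ drop (Suc i) w"

lemma length_remove_nth [simp]: "i < length w \<Longrightarrow> length (remove_nth i w) = length w - 1"
  by (auto simp: remove_nth_def)

lemma remove_nth_Cons_0 [simp]: "remove_nth 0 (y # w) = w"
  by (simp add: remove_nth_def)

lemma remove_nth_Cons_Suc [simp]: "remove_nth (Suc i) (y # w) = y # remove_nth i w"
  by (simp add: remove_nth_def)

lemma nth_remove_nth:
  "i < length w \<Longrightarrow> k < length w - 1 \<Longrightarrow> remove_nth i w ! k = (if k < i then w ! k else w ! Suc k)"
  by (auto simp: remove_nth_def nth_append min_def)

lemma remove_nth_remove_nth:
  "a < b \<Longrightarrow> b < length w \<Longrightarrow> remove_nth a (remove_nth b w) = remove_nth (b - 1) (remove_nth a w)"
  by (rule nth_equalityI) (auto simp: nth_remove_nth)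

lemma remove_nth_append_left: "i < length u \<Longrightarrow> remove_nth i (u @ v) = remove_nth i u @ v"
  by (simp add: remove_nth_def)

lemma remove_nth_append_right: "remove_nth (i + length u) (u @ v) = u @ remove_nth i v"
  by (simp add: remove_nth_def)

lemma distinct_remove_nth: "distinct w \<Longrightarrow> distinct (remove_nth i w)"
  by (simp add: remove_nth_def set_take_disj_set_drop_if_distinct)

lemma remove_nth_eq_filter:
  "distinct w \<Longrightarrow> i < length w \<Longrightarrow> remove_nth i w = filter (\<lambda>z. z \<noteq> w ! i) w"
proof (induction w arbitrary: i)
  case (Cons a w)
  then show ?case
    by (cases i) (auto intro!: filter_True[symmetric] simp: nth_mem)
qed simp

lemma set_remove_nth_subset: "set (remove_nth i w) \<subseteq> set w"
  by (auto simp: remove_nth_def dest: in_set_takeD in_set_dropD)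

lemma set_remove_nth: "distinct w \<Longrightarrow> i < length w \<Longrightarrow> set (remove_nth i w) = set w - {w ! i}"
  by (auto simp: remove_nth_eq_filter)

definition index :: "'a list \<Rightarrow> 'a \<Rightarrow> nat" where
  "index w x = length (takeWhile (\<lambda>z. z \<noteq> x) w)"

lemma index_less_length: "x \<in> set w \<Longrightarrow> index w x < length w"
  unfolding index_def by (induction w) auto

lemma nth_index: "x \<in> set w \<Longrightarrow> w ! index w x = x"
  using nth_length_takeWhile[of "\<lambda>z. z \<noteq> x" w] index_less_length[of x w] by (simp add: index_def)

lemma index_nth: "distinct w \<Longrightarrow> i < length w \<Longrightarrow> index w (w ! i) = i"
proof (induction w arbitrary: i)
  case (Cons a w)
  then show ?case
    by (cases i) (auto simp: index_def nth_mem)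
qed simp

lemma filter_takeWhile_commute:
  "(\<And>x. x \<in> set xs \<Longrightarrow> \<not> P x \<Longrightarrow> Q x) \<Longrightarrow> filter P (takeWhile Q xs) = takeWhile Q (filter P xs)"
  by (induction xs) auto

lemma index_filter:
  assumes "P x"
  shows "index (filter P w) x + length (filter (\<lambda>z. \<not> P z) (takeWhile (\<lambda>z. z \<noteq> x) w)) = index w x"
proof -
  have "takeWhile (\<lambda>z. z \<noteq> x) (filter P w) = filter P (takeWhile (\<lambda>z. z \<noteq> x) w)"
    by (rule filter_takeWhile_commute[symmetric]) (use assms in auto)
  then show ?thesis
    unfolding index_def using sum_length_filter_compl[of P "takeWhile (\<lambda>z. z \<noteq> x) w"] by simp
qed

lemma filter_mem_takeWhile_nth:
  assumes "filter (\<lambda>z. z \<in> set ys) xs = ys" "distinct ys" "k < length ys"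
  shows "filter (\<lambda>z. z \<in> set ys) (takeWhile (\<lambda>z. z \<noteq> ys ! k) xs) = take k ys"
proof -
  have "z \<notin> set ys \<Longrightarrow> z \<noteq> ys ! k" for z
    using nth_mem[OF assms(3)] by auto
  then have "filter (\<lambda>z. z \<in> set ys) (takeWhile (\<lambda>z. z \<noteq> ys ! k) xs) = takeWhile (\<lambda>z. z \<noteq> ys ! k) ys"
    using filter_takeWhile_commute[of xs "\<lambda>z. z \<in> set ys" "\<lambda>z. z \<noteq> ys ! k"] assms(1) by simp
  also have "\<dots> = take k ys"
    using index_nth[OF assms(2,3)] by (subst takeWhile_eq_take) (simp add: index_def)
  finally show ?thesis .
qed

lemma index_filter_subseq:
  assumes "filter (\<lambda>z. z \<in> set ys) xs = ys" "distinct ys" "k < length ys"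
    and "P (ys ! k)" "\<And>z. \<not> P z \<Longrightarrow> z \<in> set ys"
  shows "index (filter P xs) (ys ! k) + length (filter (\<lambda>z. \<not> P z) (take k ys)) = index xs (ys ! k)"
proof -
  have "filter (\<lambda>z. \<not> P z) (takeWhile (\<lambda>z. z \<noteq> ys ! k) xs) =
      filter (\<lambda>z. \<not> P z) (filter (\<lambda>z. z \<in> set ys) (takeWhile (\<lambda>z. z \<noteq> ys ! k) xs))"
    using assms(5) by (auto intro: filter_cong)
  then show ?thesis
    using index_filter[of P "ys ! k" xs] assms(4) filter_mem_takeWhile_nth[OF assms(1-3)] by simp
qed

lemma filter_mem_filter:
  assumes "filter (\<lambda>z. z \<in> set ys) xs = ys" "distinct ys"
  shows "filter (\<lambda>z. z \<in> set (filter P ys)) xs = filter P ys"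
proof -
  have "filter (\<lambda>z. z \<in> set (filter P ys)) xs =
      filter (\<lambda>z. z \<in> set (filter P ys)) (filter (\<lambda>z. z \<in> set ys) xs)"
    by (auto intro: filter_cong)
  also have "\<dots> = filter P ys"
    unfolding assms(1) by (rule filter_cong) auto
  finally show ?thesis .
qed

section \<open>The Pfaffian by expansion along the first letter\<close>

lemma sum_lessThan_add:
  "(\<Sum>i<m + (n::nat). g i) = (\<Sum>i<m. g i) + (\<Sum>i<n. g (m + i) :: 'b::comm_monoid_add)"
  by (induction n) (simp_all add: add_ac)

lemma sum_lessThan_triangle_swap:
  "(\<Sum>i<(n::nat). \<Sum>k<i. G i k) = (\<Sum>k<n. \<Sum>i\<in>{k<..<n}. G i k :: 'b::comm_monoid_add)"
proof (cases n)
  case (Suc m)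
  have "{k<..<Suc m} = {Suc k..m}" for k
    by auto
  moreover have "(\<Sum>i<Suc m. \<Sum>k<i. G i k) = (\<Sum>j<m. \<Sum>i = Suc j..m. G i j)"
    using sum.nested_swap'[of G m] by (simp only: lessThan_Suc_atMost)
  ultimately show ?thesis
    by (simp add: Suc)
qed simp

definition alternating :: "('a \<Rightarrow> 'a \<Rightarrow> 'r::ring) \<Rightarrow> bool" where
  "alternating F \<longleftrightarrow> (\<forall>x y. F x y = - F y x) \<and> (\<forall>x. F x x = 0)"

lemma alternatingI: "(\<And>x y. F x y = - F y x) \<Longrightarrow> (\<And>x. F x x = 0) \<Longrightarrow> alternating F"
  unfolding alternating_def by blast

lemma alternating_swap: "alternating F \<Longrightarrow> F x y = - F y x"
  unfolding alternating_def by blast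

lemma alternating_diag: "alternating F \<Longrightarrow> F x x = 0"
  unfolding alternating_def by blast

lemma alternating_add:
  assumes "alternating F" "alternating G"
  shows "alternating (\<lambda>x y. F x y + G x y)"
proof (rule alternatingI)
  show "F x y + G x y = - (F y x + G y x)" for x y
    using alternating_swap[OF assms(1), of x y] alternating_swap[OF assms(2), of x y] by simp
  show "F x x + G x x = 0" for x
    using alternating_diag[OF assms(1)] alternating_diag[OF assms(2)] by simp
qed

lemma alternating_diff:
  assumes "alternating F" "alternating G"
  shows "alternating (\<lambda>x y. F x y - G x y)"
proof (rule alternatingI)
  show "F x y - G x y = - (F y x - G y x)" for x y
    using alternating_swap[OF assms(1), of x y] alternating_swap[OF assms(2), of x y] by simp
  show "F x x - G x x = 0" for x
    using alternating_diag[OF assms(1)] alternating_diag[OF assms(2)] by simp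
qed

lemma alternating_mult_left:
  assumes "alternating F"
  shows "alternating (\<lambda>x y. c * F x y)"
proof (rule alternatingI)
  show "c * F x y = - (c * F y x)" for x y
    using alternating_swap[OF assms, of x y] by simp
  show "c * F x x = 0" for x
    using alternating_diag[OF assms] by simp
qed

lemma alternating_mult_right:
  assumes "alternating F"
  shows "alternating (\<lambda>x y. F x y * c)"
proof (rule alternatingI)
  show "F x y * c = - (F y x * c)" for x y
    using alternating_swap[OF assms, of x y] by simp
  show "F x x * c = 0" for x
    using alternating_diag[OF assms] by simp
qed

lemma alternating_sum:
  assumes "\<And>i. i \<in> I \<Longrightarrow> alternating (F i)"
  shows "alternating (\<lambda>x y. \<Sum>i\<in>I. F i x y)"
proof (rule alternatingI)
  show "(\<Sum>i\<in>I. F i x y) = - (\<Sum>i\<in>I. F i y x)" for x y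
    unfolding sum_negf[symmetric] by (rule sum.cong[OF refl], rule alternating_swap[OF assms])
  show "(\<Sum>i\<in>I. F i x x) = 0" for x
    using alternating_diag[OF assms] by simp
qed

lemma alternating_antisymmetrization: "alternating (\<lambda>x y. G x y - G y x)"
  by (rule alternatingI) simp_all

function pf_rec :: "('a \<Rightarrow> 'a \<Rightarrow> 'r::comm_ring_1) \<Rightarrow> 'a list \<Rightarrow> 'r" where
  "pf_rec f [] = 1"
| "pf_rec f (x # w) = (\<Sum>i<length w. (-1)^i * f x (w ! i) * pf_rec f (remove_nth i w))"
  by pat_completeness auto
termination by (relation "measure (\<lambda>(f, w). length w)") (auto simp: remove_nth_def)

declare pf_rec.simps(2) [simp del]

lemma pf_rec_singleton [simp]: "pf_rec f [x] = 0"
  by (simp add: pf_rec.simps(2))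

lemma pf_rec_odd: "odd (length w) \<Longrightarrow> pf_rec f w = 0"
proof (induction "length w" arbitrary: w rule: less_induct)
  case less
  then obtain x w' where w: "w = x # w'"
    by (cases w) auto
  have "pf_rec f (remove_nth i w') = 0" if "i < length w'" for i
    using less that w by auto
  then show ?case
    unfolding w pf_rec.simps by simp
qed

lemma pf_rec_Cons_Cons:
  "pf_rec f (x # y # w) =
     f x y * pf_rec f w - (\<Sum>i<length w. (-1)^i * f x (w ! i) * pf_rec f (y # remove_nth i w))"
  unfolding pf_rec.simps(2)[of f x] length_Cons sum.lessThan_Suc_shift
  by (simp add: sum_negf del: sum.lessThan_Suc)

(* The double expansion of pf_rec (x # y # w) along x and then along y, with the summand
   abstracted to h. *)
definition sum_remove_two :: "('a \<Rightarrow> 'a \<Rightarrow> 'a list \<Rightarrow> 'r::comm_ring_1) \<Rightarrow> 'a list \<Rightarrow> 'r" where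
  "sum_remove_two h w =
     (\<Sum>i<length w. \<Sum>k<length w - 1.
        (-1)^(i + k) * h (w ! i) (remove_nth i w ! k) (remove_nth k (remove_nth i w)))"

lemma sum_remove_two_row:
  fixes h :: "'a \<Rightarrow> 'a \<Rightarrow> 'a list \<Rightarrow> 'r::comm_ring_1"
  assumes i: "i < length w"
  shows "(\<Sum>k<length w - 1. (-1)^(i + k) * h (w ! i) (remove_nth i w ! k) (remove_nth k (remove_nth i w))) =
    (\<Sum>k<i. (-1)^(i + k) * h (w ! i) (w ! k) (remove_nth k (remove_nth i w))) -
    (\<Sum>j\<in>{i<..<length w}. (-1)^(i + j) * h (w ! i) (w ! j) (remove_nth i (remove_nth j w)))"
    (is "(\<Sum>k<_. ?F k) = (\<Sum>k<i. ?earlier k) - (\<Sum>j\<in>_. ?later j)")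
proof -
  have "{..<length w - 1} = {..<i} \<union> {i..<length w - 1}"
    using i by auto
  then have "(\<Sum>k<length w - 1. ?F k) = (\<Sum>k<i. ?F k) + (\<Sum>k\<in>{i..<length w - 1}. ?F k)"
    by (simp add: sum.union_disjoint ivl_disj_int)
  moreover have "(\<Sum>k<i. ?F k) = (\<Sum>k<i. ?earlier k)"
    using i by (intro sum.cong) (simp_all add: nth_remove_nth)
  moreover have "(\<Sum>j\<in>{i<..<length w}. ?later j) = - (\<Sum>k\<in>{i..<length w - 1}. ?F k)"
  proof -
    have img: "{i<..<length w} = Suc ` {i..<length w - 1}"
      using i by (auto simp: image_iff)
    have "(\<Sum>j\<in>{i<..<length w}. ?later j) = (\<Sum>k\<in>{i..<length w - 1}. ?later (Suc k))"
      unfolding img by (rule sum.reindex[unfolded comp_def]) simp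
    also have "\<dots> = (\<Sum>k\<in>{i..<length w - 1}. - ?F k)"
    proof (rule sum.cong[OF refl])
      fix k
      assume "k \<in> {i..<length w - 1}"
      then have "remove_nth i (remove_nth (Suc k) w) = remove_nth k (remove_nth i w)"
        "remove_nth i w ! k = w ! Suc k"
        using i remove_nth_remove_nth[of i "Suc k" w] by (auto simp: nth_remove_nth)
      then show "?later (Suc k) = - ?F k"
        by simp
    qed
    finally show ?thesis
      by (simp add: sum_negf)
  qed
  ultimately show ?thesis
    by simp
qed

lemma sum_remove_two_ordered:
  "sum_remove_two h w =
     (\<Sum>i<length w. \<Sum>j\<in>{i<..<length w}. (-1)^(i + j) *
        (h (w ! j) (w ! i) (remove_nth i (remove_nth j w)) - h (w ! i) (w ! j) (remove_nth i (remove_nth j w))))"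
proof -
  define n where "n = length w"
  define earlier where "earlier i k = (-1)^(i + k) * h (w ! i) (w ! k) (remove_nth k (remove_nth i w))" for i k
  define later where "later i j = (-1)^(i + j) * h (w ! i) (w ! j) (remove_nth i (remove_nth j w))" for i j
  have "sum_remove_two h w = (\<Sum>i<n. (\<Sum>k<i. earlier i k) - (\<Sum>j\<in>{i<..<n}. later i j))"
    unfolding sum_remove_two_def n_def earlier_def later_def
    by (rule sum.cong[OF refl], rule sum_remove_two_row) simp
  also have "\<dots> = (\<Sum>k<n. \<Sum>i\<in>{k<..<n}. earlier i k) - (\<Sum>i<n. \<Sum>j\<in>{i<..<n}. later i j)"
    by (simp add: sum_subtractf sum_lessThan_triangle_swap)
  also have "\<dots> = (\<Sum>i<n. \<Sum>j\<in>{i<..<n}. earlier j i - later i j)"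
    by (simp add: sum_subtractf)
  finally show ?thesis
    unfolding n_def earlier_def later_def by (simp add: right_diff_distrib add.commute)
qed

lemma sum_remove_two_swap: "sum_remove_two h w = - sum_remove_two (\<lambda>p q r. h q p r) w"
  unfolding sum_remove_two_ordered by (simp add: sum_negf[symmetric] algebra_simps)

lemma pf_rec_Cons_Cons_sum_remove_two:
  "pf_rec f (x # y # w) = f x y * pf_rec f w - sum_remove_two (\<lambda>p q r. f x p * f y q * pf_rec f r) w"
proof -
  have *: "(-1)^i * f x (w ! i) * pf_rec f (y # remove_nth i w) =
      (\<Sum>k<length w - 1. (-1)^(i + k) * (f x (w ! i) * f y (remove_nth i w ! k) *
         pf_rec f (remove_nth k (remove_nth i w))))" if "i < length w" for i
    unfolding pf_rec.simps(2)[of f y] sum_distrib_left using that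
    by (intro sum.cong) (simp_all add: power_add ac_simps)
  show ?thesis
    unfolding pf_rec_Cons_Cons sum_remove_two_def by (subst sum.cong[OF refl *]) simp_all
qed

lemma pf_rec_Cons_append:
  "pf_rec f (z # pre @ w) =
     (\<Sum>i<length pre. (-1)^i * (f z (pre ! i) * pf_rec f (remove_nth i pre @ w))) +
     (-1)^length pre * (\<Sum>i<length w. (-1)^i * (f z (w ! i) * pf_rec f (pre @ remove_nth i w)))"
  unfolding pf_rec.simps(2)[of f z] length_append sum_lessThan_add
  by (simp add: remove_nth_append_left remove_nth_append_right nth_append sum_distrib_left
      power_add ac_simps)

lemma pf_rec_Cons_append_Cons_Cons:
  "pf_rec f (z # pre @ x # y # post) =
     (\<Sum>i<length pre. (-1)^i * (f z (pre ! i) * pf_rec f (remove_nth i pre @ x # y # post))) +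
     (-1)^length pre * ((f z x * pf_rec f (pre @ y # post) - f z y * pf_rec f (pre @ x # post)) +
       (\<Sum>i<length post. (-1)^i * (f z (post ! i) * pf_rec f (pre @ x # y # remove_nth i post))))"
  unfolding pf_rec_Cons_append length_Cons sum.lessThan_Suc_shift
  by (simp add: algebra_simps del: sum.lessThan_Suc)

locale skew_form =
  fixes f :: "'a \<Rightarrow> 'a \<Rightarrow> 'r::comm_ring_1"
  assumes alternating_form: "alternating f"
begin

lemma pf_rec_Cons_Cons_alternating: "alternating (\<lambda>x y. pf_rec f (x # y # w))"
proof -
  define r where "r i j = remove_nth i (remove_nth j w)" for i j
  define G where "G i j x y = f x (w ! j) * f y (w ! i) * pf_rec f (r i j)" for i j x y
  have "pf_rec f (x # y # w) = f x y * pf_rec f w -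
      (\<Sum>i<length w. \<Sum>j\<in>{i<..<length w}. (-1)^(i + j) * (G i j x y - G i j y x))" for x y
    unfolding pf_rec_Cons_Cons_sum_remove_two sum_remove_two_ordered G_def r_def
    by (simp add: ac_simps)
  then show ?thesis
    by (simp only: alternating_diff alternating_mult_right alternating_form alternating_sum
        alternating_mult_left alternating_antisymmetrization)
qed

lemma pf_rec_alternating: "alternating (\<lambda>x y. pf_rec f (pre @ x # y # post))"
proof (induction "length pre" arbitrary: pre post rule: less_induct)
  case less
  show ?case
  proof (cases pre)
    case Nil
    then show ?thesis
      using pf_rec_Cons_Cons_alternating by simp
  next
    case (Cons z pre')
    have "alternating (\<lambda>x y. pf_rec f (remove_nth i pre' @ x # y # post))" if "i < length pre'" for i
      using less that Cons by simp
    moreover have "alternating (\<lambda>x y. pf_rec f (pre' @ x # y # post'))" for post'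
      using less Cons by simp
    ultimately show ?thesis
      unfolding Cons append_Cons pf_rec_Cons_append_Cons_Cons
      by (intro alternating_add alternating_sum alternating_mult_left alternating_antisymmetrization) auto
  qed
qed

lemma pf_rec_swap: "pf_rec f (pre @ x # y # post) = - pf_rec f (pre @ y # x # post)"
  using alternating_swap[OF pf_rec_alternating] .

lemma pf_rec_repeat: "pf_rec f (pre @ x # x # post) = 0"
  using alternating_diag[OF pf_rec_alternating] .

lemma pf_rec_move: "pf_rec f (pre @ x # m @ post) = (-1)^length m * pf_rec f (pre @ m @ x # post)"
proof (induction m arbitrary: pre)
  case (Cons c m)
  have "pf_rec f (pre @ x # c # m @ post) = - pf_rec f ((pre @ [c]) @ x # m @ post)"
    using pf_rec_swap[of pre x c "m @ post"] by simp
  also have "\<dots> = - ((-1)^length m * pf_rec f ((pre @ [c]) @ m @ x # post))"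
    using Cons.IH[of "pre @ [c]"] by simp
  finally show ?case
    by simp
qed simp

lemma pf_rec_not_distinct: "\<not> distinct w \<Longrightarrow> pf_rec f w = 0"
proof -
  assume "\<not> distinct w"
  then obtain a x b c where w: "w = a @ x # b @ x # c"
    using not_distinct_decomp by fastforce
  have "pf_rec f (a @ x # b @ x # c) = (-1)^length b * pf_rec f ((a @ b) @ x # x # c)"
    using pf_rec_move[of a x b "x # c"] by simp
  then show ?thesis
    unfolding w pf_rec_repeat by simp
qed

lemma pf_rec_nth_Cons_remove_nth:
  assumes "i < length w"
  shows "pf_rec f (w ! i # remove_nth i w) = (-1)^i * pf_rec f w"
proof -
  have "w = take i w @ w ! i # drop (Suc i) w"
    using assms by (rule id_take_nth_drop)
  then show ?thesis
    using pf_rec_move[of "[]" "w ! i" "take i w" "drop (Suc i) w"] assms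
    by (simp add: remove_nth_def)
qed

lemma pf_rec_Cons_filter:
  assumes "distinct w" "x \<in> set w"
  shows "pf_rec f (x # filter (\<lambda>z. z \<noteq> x) w) = (-1)^index w x * pf_rec f w"
  using pf_rec_nth_Cons_remove_nth[OF index_less_length[OF assms(2)]]
  by (simp add: nth_index[OF assms(2)] remove_nth_eq_filter[OF assms(1) index_less_length[OF assms(2)]])

end

section \<open>A quadratic identity\<close>

definition exchange_sum :: "('a \<Rightarrow> 'a \<Rightarrow> 'r::comm_ring_1) \<Rightarrow> 'a list \<Rightarrow> 'a list \<Rightarrow> 'r" where
  "exchange_sum f u v = (\<Sum>i<length u. (-1)^i * pf_rec f (remove_nth i u) * pf_rec f (u ! i # v))"

lemma exchange_sum_Cons_left:
  "exchange_sum f (a # u) v =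
     pf_rec f u * pf_rec f (a # v) + (\<Sum>k<length u. (-1)^k * f a (u ! k) * exchange_sum f (remove_nth k u) v)"
proof -
  define h where "h p q r = f a q * pf_rec f r * pf_rec f (p # v)" for p q r
  have "exchange_sum f (a # u) v = pf_rec f u * pf_rec f (a # v) +
      (\<Sum>i<length u. (-1)^Suc i * pf_rec f (a # remove_nth i u) * pf_rec f (u ! i # v))"
    unfolding exchange_sum_def length_Cons sum.lessThan_Suc_shift by (simp del: sum.lessThan_Suc)
  also have "(\<Sum>i<length u. (-1)^Suc i * pf_rec f (a # remove_nth i u) * pf_rec f (u ! i # v)) =
      - sum_remove_two h u"
  proof -
    have "(-1)^Suc i * pf_rec f (a # remove_nth i u) * pf_rec f (u ! i # v) =
        - (\<Sum>k<length u - 1. (-1)^(i + k) * h (u ! i) (remove_nth i u ! k) (remove_nth k (remove_nth i u)))"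
      if "i < length u" for i
      unfolding pf_rec.simps(2)[of f a] h_def sum_distrib_left sum_distrib_right sum_negf[symmetric]
      using that by (intro sum.cong) (simp_all add: power_add ac_simps)
    then show ?thesis
      unfolding sum_remove_two_def sum_negf[symmetric] by (intro sum.cong) simp_all
  qed
  also have "- sum_remove_two h u = sum_remove_two (\<lambda>p q r. h q p r) u"
    by (subst sum_remove_two_swap) simp
  also have "\<dots> = (\<Sum>k<length u. (-1)^k * f a (u ! k) * exchange_sum f (remove_nth k u) v)"
    unfolding sum_remove_two_def
  proof (rule sum.cong[OF refl])
    fix i
    assume "i \<in> {..<length u}"
    then show "(\<Sum>k<length u - 1. (-1)^(i + k) * h (remove_nth i u ! k) (u ! i) (remove_nth k (remove_nth i u))) =
        (-1)^i * f a (u ! i) * exchange_sum f (remove_nth i u) v"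
      unfolding exchange_sum_def h_def sum_distrib_left
      by (intro sum.cong) (simp_all add: power_add ac_simps)
  qed
  finally show ?thesis .
qed

context skew_form
begin

lemma exchange_sum_Cons_right:
  "exchange_sum f v (a # u) =
     - pf_rec f u * pf_rec f (a # v) + (\<Sum>k<length u. (-1)^k * f a (u ! k) * exchange_sum f v (remove_nth k u))"
proof -
  have expand: "pf_rec f (v ! j # a # u) =
      - (f a (v ! j) * pf_rec f u) + (\<Sum>k<length u. (-1)^k * f a (u ! k) * pf_rec f (v ! j # remove_nth k u))" for j
    using pf_rec_swap[of "[]" "v ! j" a u] pf_rec_Cons_Cons[of f a "v ! j" u] by simp
  have "exchange_sum f v (a # u) =
      (\<Sum>j<length v. (-1)^j * pf_rec f (remove_nth j v) * (- (f a (v ! j) * pf_rec f u))) +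
      (\<Sum>j<length v. \<Sum>k<length u. (-1)^j * pf_rec f (remove_nth j v) *
         ((-1)^k * f a (u ! k) * pf_rec f (v ! j # remove_nth k u)))"
    unfolding exchange_sum_def expand by (simp only: distrib_left sum.distrib sum_distrib_left)
  also have "(\<Sum>j<length v. (-1)^j * pf_rec f (remove_nth j v) * (- (f a (v ! j) * pf_rec f u))) =
      - pf_rec f u * pf_rec f (a # v)"
    unfolding pf_rec.simps(2)[of f a] sum_distrib_left sum_negf[symmetric]
    by (intro sum.cong) (simp_all add: ac_simps)
  also have "(\<Sum>j<length v. \<Sum>k<length u. (-1)^j * pf_rec f (remove_nth j v) *
         ((-1)^k * f a (u ! k) * pf_rec f (v ! j # remove_nth k u))) =
      (\<Sum>k<length u. (-1)^k * f a (u ! k) * exchange_sum f v (remove_nth k u))"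
    unfolding exchange_sum_def sum_distrib_left
    by (subst sum.swap) (intro sum.cong, simp_all add: ac_simps)
  finally show ?thesis .
qed

lemma exchange_sum_antisym: "exchange_sum f u v = - exchange_sum f v u"
proof (induction "length u" arbitrary: u v rule: less_induct)
  case less
  show ?case
  proof (cases u)
    case Nil
    then show ?thesis
      by (simp add: exchange_sum_def)
  next
    case (Cons a u')
    have "exchange_sum f (remove_nth k u') v = - exchange_sum f v (remove_nth k u')" if "k < length u'" for k
      using less that Cons by simp
    then have "(\<Sum>k<length u'. (-1)^k * f a (u' ! k) * exchange_sum f (remove_nth k u') v) =
        - (\<Sum>k<length u'. (-1)^k * f a (u' ! k) * exchange_sum f v (remove_nth k u'))"
      unfolding sum_negf[symmetric] by (intro sum.cong) simp_all
    then show ?thesis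
      unfolding Cons exchange_sum_Cons_left exchange_sum_Cons_right by simp
  qed
qed

lemma exchange_sum_eq_sum_set:
  assumes "distinct u"
  shows "exchange_sum f u v =
    (\<Sum>x\<in>set u - set v. (-1)^index u x * pf_rec f (filter (\<lambda>z. z \<noteq> x) u) * pf_rec f (x # v))"
proof -
  define g where "g x = (-1)^index u x * pf_rec f (filter (\<lambda>z. z \<noteq> x) u) * pf_rec f (x # v)" for x
  have "exchange_sum f u v = (\<Sum>i<length u. g (u ! i))"
    unfolding exchange_sum_def g_def using assms
    by (intro sum.cong) (simp_all add: index_nth remove_nth_eq_filter)
  also have "\<dots> = (\<Sum>x\<in>set u. g x)"
    by (rule sum.reindex_bij_betw) (rule bij_betw_nth[OF assms refl refl])
  also have "\<dots> = (\<Sum>x\<in>set u - set v. g x)"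
    by (rule sum.mono_neutral_right) (auto simp: g_def pf_rec_not_distinct)
  finally show ?thesis
    unfolding g_def .
qed

end

lemma minus_one_power_mult_odd:
  assumes "odd (a + b + j)"
  shows "(-1)^a * (-1)^b = - ((-1)^j :: 'r::ring_1)"
proof -
  have "even (a + b) \<longleftrightarrow> odd j"
    using assms by presburger
  then have "(-1)^(a + b) = - ((-1)^j :: 'r)"
    by (cases "even j") simp_all
  then show ?thesis
    by (simp add: power_add)
qed

context skew_form
begin

lemma exchange_sum_remove_tail:
  assumes dC: "distinct C" and sub: "filter (\<lambda>z. z \<in> set (b # B)) C = b # B"
  shows "exchange_sum f (filter (\<lambda>z. z \<notin> set B) C) (filter (\<lambda>z. z \<noteq> b) C) =
    pf_rec f (wminus C (b # B)) * pf_rec f C"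
proof -
  define W where "W = filter (\<lambda>z. z \<notin> set B) C"
  define V where "V = filter (\<lambda>z. z \<noteq> b) C"
  have dbB: "distinct (b # B)"
    using sub distinct_filter[OF dC] by metis
  have bC: "b \<in> set C"
    using sub filter_is_subset[of _ C] by (metis list.set_intros(1) subsetD)
  have "set W - set V = {b}"
    using bC dbB by (auto simp: W_def V_def)
  then have "exchange_sum f W V = (-1)^index W b * pf_rec f (filter (\<lambda>z. z \<noteq> b) W) * pf_rec f (b # V)"
    using dC by (simp add: exchange_sum_eq_sum_set W_def)
  also have "filter (\<lambda>z. z \<noteq> b) W = wminus C (b # B)"
    unfolding W_def wminus_def by (auto intro: filter_cong)
  also have "pf_rec f (b # V) = (-1)^index C b * pf_rec f C"
    unfolding V_def by (rule pf_rec_Cons_filter[OF dC bC])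
  also have "index W b = index C b"
    using index_filter_subseq[OF sub dbB, of 0 "\<lambda>z. z \<notin> set B"] dbB by (simp add: W_def)
  finally show ?thesis
    unfolding W_def V_def by (simp add: ac_simps)
qed

lemma exchange_sum_remove_head:
  assumes dC: "distinct C" and sub: "filter (\<lambda>z. z \<in> set (b # B)) C = b # B"
  shows "exchange_sum f (filter (\<lambda>z. z \<noteq> b) C) (filter (\<lambda>z. z \<notin> set B) C) =
    - (\<Sum>j<length B. (-1)^j * pf_rec f (wminus C [b, B ! j]) * pf_rec f (wminus C (remove_nth j B)))"
proof -
  define V where "V = filter (\<lambda>z. z \<noteq> b) C"
  define W where "W = filter (\<lambda>z. z \<notin> set B) C"
  define g where "g x = (-1)^index V x * pf_rec f (filter (\<lambda>z. z \<noteq> x) V) * pf_rec f (x # W)" for x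
  have dbB: "distinct (b # B)"
    using sub distinct_filter[OF dC] by metis
  then have bB: "b \<notin> set B" and dB: "distinct B"
    by auto
  have BC: "set (b # B) \<subseteq> set C"
    using sub filter_is_subset[of _ C] by metis
  have g_nth: "g (B ! j) = - ((-1)^j * pf_rec f (wminus C [b, B ! j]) * pf_rec f (wminus C (remove_nth j B)))"
    if j: "j < length B" for j
  proof -
    define x where "x = B ! j"
    define Wx where "Wx = wminus C (remove_nth j B)"
    have x: "(b # B) ! Suc j = x" "x \<in> set B" "x \<in> set C" "x \<noteq> b"
      using j BC bB by (auto simp: x_def)
    have x_take: "x \<notin> set (take j B)"
    proof -
      have "distinct (take j B @ x # drop (Suc j) B)"
        using dB unfolding x_def by (subst (asm) id_take_nth_drop[OF j])
      then show ?thesis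
        by simp
    qed
    have set_rem: "set (remove_nth j B) = set B - {x}"
      using dB j by (simp add: set_remove_nth x_def)
    have "filter (\<lambda>z. z = b) (take j B) = []"
      using bB by (auto simp: filter_empty_conv dest: in_set_takeD)
    then have index_V: "index V x + 1 = index C x"
      using index_filter_subseq[OF sub dbB, of "Suc j" "\<lambda>z. z \<noteq> b"] j x by (simp add: V_def)
    have "filter (\<lambda>z. z \<in> set B \<and> z \<noteq> x) (take j B) = take j B"
      using x_take by (auto intro: filter_True dest: in_set_takeD)
    then have index_Wx: "index Wx x + j = index C x"
      using index_filter_subseq[OF sub dbB, of "Suc j" "\<lambda>z. z \<notin> set (remove_nth j B)"] j x set_rem bB
      by (simp add: Wx_def wminus_def)
    have V_x: "filter (\<lambda>z. z \<noteq> x) V = wminus C [b, x]"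
      unfolding V_def wminus_def by (auto intro: filter_cong)
    have W_x: "pf_rec f (x # W) = (-1)^index Wx x * pf_rec f Wx"
    proof -
      have "filter (\<lambda>z. z \<noteq> x) Wx = W"
        using x(2) unfolding Wx_def W_def wminus_def set_rem by (auto intro: filter_cong)
      moreover have "x \<in> set Wx"
        using x(3) set_rem by (simp add: Wx_def wminus_def)
      ultimately show ?thesis
        using pf_rec_Cons_filter[of Wx x] dC by (simp add: Wx_def wminus_def)
    qed
    have sign: "(-1)^index V x * (-1)^index Wx x = - ((-1)^j :: 'r)"
      by (rule minus_one_power_mult_odd) (use index_V index_Wx in presburger)
    have "g x = ((-1)^index V x * (-1)^index Wx x) * (pf_rec f (wminus C [b, x]) * pf_rec f Wx)"
      unfolding g_def V_x W_x by (simp only: ac_simps)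
    then show ?thesis
      unfolding sign by (simp add: x_def Wx_def)
  qed
  have "set V - set W = set B"
    using BC bB by (auto simp: V_def W_def)
  then have "exchange_sum f V W = (\<Sum>x\<in>set B. g x)"
    using dC by (simp add: exchange_sum_eq_sum_set V_def g_def)
  also have "\<dots> = (\<Sum>j<length B. g (B ! j))"
    by (rule sum.reindex_bij_betw[symmetric]) (rule bij_betw_nth[OF dB refl refl])
  finally show ?thesis
    unfolding V_def W_def by (simp add: g_nth sum_negf)
qed

lemma pf_rec_wminus_expansion:
  assumes "distinct C" "filter (\<lambda>z. z \<in> set (b # B)) C = b # B"
  shows "(\<Sum>j<length B. (-1)^j * pf_rec f (wminus C [b, B ! j]) * pf_rec f (wminus C (remove_nth j B))) =
    pf_rec f (wminus C (b # B)) * pf_rec f C"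
  using exchange_sum_antisym[of "filter (\<lambda>z. z \<notin> set B) C" "filter (\<lambda>z. z \<noteq> b) C"]
  unfolding exchange_sum_remove_tail[OF assms] exchange_sum_remove_head[OF assms] by simp

lemma pf_rec_wminus_power:
  assumes dC: "distinct C"
  shows "filter (\<lambda>z. z \<in> set \<beta>) C = \<beta> \<Longrightarrow> length \<beta> = 2 * n \<Longrightarrow> n \<ge> 1 \<Longrightarrow>
    pf_rec f (wminus C \<beta>) * pf_rec f C ^ (n - 1) = pf_rec (\<lambda>x y. pf_rec f (wminus C [x, y])) \<beta>"
proof (induction n arbitrary: \<beta>)
  case (Suc m)
  define g where "g = (\<lambda>x y. pf_rec f (wminus C [x, y]))"
  obtain b B where \<beta>: "\<beta> = b # B"
    using Suc.prems(2) by (cases \<beta>) auto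
  have sub: "filter (\<lambda>z. z \<in> set (b # B)) C = b # B"
    using Suc.prems(1) \<beta> by simp
  have dbB: "distinct (b # B)"
    using sub distinct_filter[OF dC] by metis
  have lB: "length B = 2 * m + 1"
    using Suc.prems(2) \<beta> by simp
  show ?case
  proof (cases "m = 0")
    case True
    then obtain b' where "B = [b']"
      using lB by (cases B) auto
    then show ?thesis
      using True \<beta> by (simp add: pf_rec.simps(2))
  next
    case False
    have IH: "pf_rec (\<lambda>x y. pf_rec f (wminus C [x, y])) (remove_nth j B) =
        pf_rec f (wminus C (remove_nth j B)) * pf_rec f C ^ (m - 1)" if j: "j < length B" for j
    proof -
      have "remove_nth j B = filter (\<lambda>z. z \<noteq> b \<and> z \<noteq> B ! j) (b # B)"
        using dbB j by (auto simp: remove_nth_eq_filter intro: filter_cong)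
      then have "filter (\<lambda>z. z \<in> set (remove_nth j B)) C = remove_nth j B"
        using filter_mem_filter[OF sub dbB] by metis
      then show ?thesis
        using Suc.IH[of "remove_nth j B"] lB j False by simp
    qed
    have "pf_rec g (b # B) = (\<Sum>j<length B. (-1)^j * g b (B ! j) * pf_rec g (remove_nth j B))"
      by (simp add: pf_rec.simps(2))
    also have "\<dots> = pf_rec f C ^ (m - 1) *
        (\<Sum>j<length B. (-1)^j * pf_rec f (wminus C [b, B ! j]) * pf_rec f (wminus C (remove_nth j B)))"
      unfolding sum_distrib_left g_def by (intro sum.cong) (simp_all add: IH ac_simps)
    also have "\<dots> = pf_rec f (wminus C (b # B)) * pf_rec f C ^ m"
      unfolding pf_rec_wminus_expansion[OF dC sub] using False by (cases m) (simp_all add: ac_simps)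
    finally show ?thesis
      unfolding \<beta> g_def by simp
  qed
qed simp

end

section \<open>Signs of rearrangements\<close>

lemma wsign_eq_sign:
  assumes du: "distinct u" and p: "p permutes {..<length u}" and v: "permute_list p u = v"
  shows "wsign u v = of_int (sign p)"
proof -
  have dv: "distinct v" unfolding v[symmetric] using du p by (simp add: distinct_permute_list)
  have sv: "set v = set u" unfolding v[symmetric] using p by (simp add: set_permute_list)
  have wm: "wminus u v = []" unfolding wminus_def sv by simp
  have uniq: "q = p" if q: "q permutes {..<length u}" "permute_list q u = v" for q
  proof
    fix i show "q i = p i"
    proof (cases "i < length u")
      case True
      have qi: "q i < length u" using permutes_in_image[OF q(1)] True by simp
      have pi: "p i < length u" using permutes_in_image[OF p] True by simp
      have "u ! q i = v ! i" using permute_list_nth[OF q(1) True] q(2) by simp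
      moreover have "u ! p i = v ! i" using permute_list_nth[OF p True] v by simp
      ultimately have "u ! q i = u ! p i" by simp
      then show ?thesis using nth_eq_iff_index_eq[OF du qi pi] by simp
    next
      case False
      then show ?thesis using permutes_not_in[OF q(1)] permutes_not_in[OF p] by simp
    qed
  qed
  have "(THE p. p permutes {..<length u} \<and> permute_list p u = v @ wminus u v) = p"
    unfolding wm append_Nil2
  proof (rule the_equality)
    show "p permutes {..<length u} \<and> permute_list p u = v" using p v by simp
  next
    fix q assume "q permutes {..<length u} \<and> permute_list q u = v"
    then show "q = p" using uniq by blast
  qed
  moreover have "\<not> (\<not> distinct u \<or> \<not> distinct v \<or> \<not> set v \<subseteq> set u)" using du dv sv by simp
  ultimately show ?thesis unfolding wsign_def by presburger
qed

lemma wsign_permutation: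
  assumes "distinct u" "mset v = mset u"
  obtains p where "p permutes {..<length u}" "permute_list p u = v" "wsign u v = of_int (sign p)"
proof -
  obtain p where p: "p permutes {..<length u}" "permute_list p u = v"
    using mset_eq_permutation[of v u] assms(2) by metis
  then show ?thesis using that wsign_eq_sign[OF assms(1) p] by blast
qed

lemma wsign_trans:
  assumes du: "distinct u" and v: "mset v = mset u" and w: "mset w = mset u"
  shows "wsign u w = wsign u v * (wsign v w :: 'r::comm_ring_1)"
proof -
  have dv: "distinct v" using du v mset_eq_imp_distinct_iff by blast
  have lv: "length v = length u" using v by (metis size_mset)
  have mw: "mset w = mset v" using v w by simp
  obtain p where p: "p permutes {..<length u}" "permute_list p u = v" "wsign u v = (of_int (sign p) :: 'r)"
    by (rule wsign_permutation[OF du v])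
  obtain q where q: "q permutes {..<length v}" "permute_list q v = w" "wsign v w = (of_int (sign q) :: 'r)"
    by (rule wsign_permutation[OF dv mw])
  have q': "q permutes {..<length u}" using q(1) lv by simp
  have pq: "p \<circ> q permutes {..<length u}" by (rule permutes_compose[OF q' p(1)])
  have "permute_list (p \<circ> q) u = w" using permute_list_compose[OF q', of p] p(2) q(2) by simp
  then have "wsign u w = (of_int (sign (p \<circ> q)) :: 'r)" by (rule wsign_eq_sign[OF du pq])
  also have "sign (p \<circ> q) = sign p * sign q"
    by (rule sign_compose) (use p(1) q' in \<open>auto intro: permutes_imp_permutation\<close>)
  finally show ?thesis using p(3) q(3) by simp
qed

lemma wsign_refl: "distinct u \<Longrightarrow> wsign u u = 1"
  using wsign_eq_sign[of u id u] by (simp add: permutes_id)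

lemma wsign_swap_adjacent:
  assumes d: "distinct (pre @ a # b # post)"
  shows "wsign (pre @ a # b # post) (pre @ b # a # post) = (-1 :: 'r::comm_ring_1)"
proof -
  define k where "k = length pre"
  define u where "u = pre @ a # b # post"
  have t: "transpose k (Suc k) permutes {..<length u}"
    by (rule permutes_swap_id) (auto simp: u_def k_def)
  have "permute_list (transpose k (Suc k)) u = pre @ b # a # post"
  proof (rule nth_equalityI)
    show "length (permute_list (transpose k (Suc k)) u) = length (pre @ b # a # post)" by (simp add: u_def)
  next
    fix i assume "i < length (permute_list (transpose k (Suc k)) u)"
    then have i: "i < length u" by simp
    have "permute_list (transpose k (Suc k)) u ! i = u ! transpose k (Suc k) i"
      by (rule permute_list_nth[OF t i])
    also have "\<dots> = (pre @ b # a # post) ! i"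
      unfolding u_def k_def using i
      by (cases "i < length pre"; cases "i = length pre"; cases "i = Suc (length pre)")
         (auto simp: nth_append transpose_def nth_Cons' u_def)
    finally show "permute_list (transpose k (Suc k)) u ! i = (pre @ b # a # post) ! i" .
  qed
  then have "wsign u (pre @ b # a # post) = (of_int (sign (transpose k (Suc k))) :: 'r)"
    by (rule wsign_eq_sign[OF d[folded u_def] t])
  then show ?thesis unfolding u_def by (simp add: sign_swap_id)
qed

lemma wsign_Cons:
  assumes d: "distinct (x # a)" and m: "mset b = mset a"
  shows "wsign (x # a) (x # b) = (wsign a b :: 'r::comm_ring_1)"
proof -
  have da: "distinct a" using d by simp
  obtain p where p: "p permutes {..<length a}" "permute_list p a = b" "wsign a b = (of_int (sign p) :: 'r)"
    by (rule wsign_permutation[OF da m])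
  define B where "B = Suc ` {..<length a}"
  define p' where "p' = (\<lambda>i. if i \<in> B then Suc (p (i - 1)) else i)"
  interpret pb: permutes_bij_finite p "{..<length a}" B Suc "\<lambda>i. i - 1" p'
    by unfold_locales (simp_all add: p B_def bij_betw_def p'_def)
  have pp: "p' permutes {..<length (x # a)}"
    using pb.permutes_p' by (rule permutes_subset) (auto simp: B_def)
  have "permute_list p' (x # a) = x # b"
  proof (rule nth_equalityI)
    show "length (permute_list p' (x # a)) = length (x # b)" using p(2) by auto
  next
    fix i assume "i < length (permute_list p' (x # a))"
    then have i: "i < length (x # a)" by simp
    have "permute_list p' (x # a) ! i = (x # a) ! p' i" by (rule permute_list_nth[OF pp i])
    also have "\<dots> = (x # b) ! i"
    proof (cases i)
      case 0 then show ?thesis by (simp add: p'_def B_def)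
    next
      case (Suc k)
      then have k: "k < length a" using i by simp
      then have "p' i = Suc (p k)" unfolding p'_def B_def Suc by auto
      then show ?thesis using Suc permute_list_nth[OF p(1) k] p(2) by simp
    qed
    finally show "permute_list p' (x # a) ! i = (x # b) ! i" .
  qed
  then have "wsign (x # a) (x # b) = (of_int (sign p') :: 'r)" by (rule wsign_eq_sign[OF d pp])
  also have "sign p' = sign p" by (rule pb.sign_p')
  finally show ?thesis using p(3) by simp
qed

lemma wsign_move_to_front:
  assumes d: "distinct (pre @ mid @ y # post)"
  shows "wsign (pre @ mid @ y # post) (pre @ y # mid @ post) = ((-1)^length mid :: 'r::comm_ring_1)"
  using d
proof (induction mid arbitrary: pre)
  case Nil then show ?case by (simp add: wsign_refl)
next
  case (Cons c mid)
  have IH: "wsign ((pre @ [c]) @ mid @ y # post) ((pre @ [c]) @ y # mid @ post) = ((-1)^length mid :: 'r)"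
    using Cons.IH[of "pre @ [c]"] Cons.prems by simp
  have "wsign (pre @ c # mid @ y # post) (pre @ y # c # mid @ post) =
      wsign (pre @ c # mid @ y # post) (pre @ c # y # mid @ post) *
      (wsign (pre @ c # y # mid @ post) (pre @ y # c # mid @ post) :: 'r)"
    by (rule wsign_trans) (use Cons.prems in auto)
  also have "wsign (pre @ c # y # mid @ post) (pre @ y # c # mid @ post) = (-1 :: 'r)"
    by (rule wsign_swap_adjacent) (use Cons.prems in auto)
  finally show ?case using IH by simp
qed

lemma wsign_Cons_nth_Cons:
  assumes d: "distinct (x # w)" and j: "j < length w" and v: "mset v = mset (remove_nth j w)"
  shows "wsign (x # w) (x # w ! j # v) = (-1)^j * (wsign (remove_nth j w) v :: 'r::comm_ring_1)"
proof -
  have dw: "distinct w"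
    using d by simp
  have w: "w = take j w @ w ! j # drop (Suc j) w"
    using j by (rule id_take_nth_drop)
  have front: "mset (w ! j # remove_nth j w) = mset w"
    by (subst (2) w) (simp add: remove_nth_def)
  then have dfront: "distinct (w ! j # remove_nth j w)"
    using dw mset_eq_imp_distinct_iff by blast
  have "wsign (x # w) (x # w ! j # v) = (wsign w (w ! j # v) :: 'r)"
    using d v front by (intro wsign_Cons) simp_all
  also have "\<dots> = wsign w (w ! j # remove_nth j w) * wsign (w ! j # remove_nth j w) (w ! j # v)"
    using dw v front by (intro wsign_trans) simp_all
  also have "wsign w (w ! j # remove_nth j w) = ((-1)^j :: 'r)"
    using wsign_move_to_front[of "[]" "take j w" "w ! j" "drop (Suc j) w"] dw w j
    by (simp add: remove_nth_def)
  also have "wsign (w ! j # remove_nth j w) (w ! j # v) = (wsign (remove_nth j w) v :: 'r)"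
    using dfront v by (rule wsign_Cons)
  finally show ?thesis .
qed

section \<open>Perfect matchings and the Pfaffian\<close>

lemma precedes_imp_neq: "distinct w \<Longrightarrow> precedes w a b \<Longrightarrow> a \<noteq> b"
  unfolding precedes_def using nth_eq_iff_index_eq by fastforce

lemma precedes_imp_mem: "precedes w a b \<Longrightarrow> a \<in> set w \<and> b \<in> set w"
  unfolding precedes_def by auto

lemma precedes_asym:
  assumes d: "distinct w" and ab: "precedes w a b"
  shows "\<not> precedes w b a"
proof
  assume "precedes w b a"
  then obtain i' j' where ij': "i' < j'" "j' < length w" "w ! i' = b" "w ! j' = a"
    unfolding precedes_def by blast
  obtain i j where ij: "i < j" "j < length w" "w ! i = a" "w ! j = b"
    using ab unfolding precedes_def by blast
  have "i = j'"
    using ij ij' nth_eq_iff_index_eq[OF d, of i j'] by simp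
  moreover have "j = i'"
    using ij ij' nth_eq_iff_index_eq[OF d, of j i'] by simp
  ultimately show False
    using ij ij' by simp
qed

lemma precedes_total:
  assumes "distinct w" "a \<in> set w" "b \<in> set w" "a \<noteq> b"
  shows "precedes w a b \<or> precedes w b a"
proof -
  obtain i j where "i < length w" "j < length w" "w ! i = a" "w ! j = b" "i \<noteq> j"
    using assms(2-4) by (metis in_set_conv_nth)
  then show ?thesis
    unfolding precedes_def by (cases "i < j") (auto, metis linorder_neqE_nat)
qed

lemma precedes_Cons_nth: "j < length w \<Longrightarrow> precedes (x # w) x (w ! j)"
  unfolding precedes_def by (rule exI[of _ 0], rule exI[of _ "Suc j"]) simp

lemma precedes_Cons_remove_nth:
  assumes "precedes (remove_nth j w) a b" "j < length w"
  shows "precedes (x # w) a b"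
proof -
  obtain i k where ik: "i < k" "k < length (remove_nth j w)" "remove_nth j w ! i = a" "remove_nth j w ! k = b"
    using assms(1) unfolding precedes_def by blast
  define m where "m i = Suc (if i < j then i else Suc i)" for i
  have "m i < m k" "m k < length (x # w)" "(x # w) ! m i = a" "(x # w) ! m k = b"
    using ik assms(2) by (auto simp: m_def nth_remove_nth)
  then show ?thesis
    unfolding precedes_def by blast
qed

lemma perfect_matching_block_subset: "M \<in> perfect_matchings S \<Longrightarrow> e \<in> M \<Longrightarrow> e \<subseteq> S"
  unfolding perfect_matchings_def by auto

lemma finite_perfect_matchings: "finite S \<Longrightarrow> finite (perfect_matchings S)"
  by (rule finite_subset[of _ "Pow (Pow S)"]) (auto simp: perfect_matchings_def)

lemma perfect_matchings_empty: "perfect_matchings {} = {{}}"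
proof -
  have "M = {}" if "M \<in> perfect_matchings {}" for M :: "'a set set"
  proof -
    have "e = {}" "card e = 2" if "e \<in> M" for e
      using \<open>M \<in> perfect_matchings {}\<close> that unfolding perfect_matchings_def by auto
    then show ?thesis
      by fastforce
  qed
  then show ?thesis
    unfolding perfect_matchings_def by auto
qed

definition is_listing :: "'a list \<Rightarrow> 'a set set \<Rightarrow> ('a \<times> 'a) list \<Rightarrow> bool" where
  "is_listing w M ps \<longleftrightarrow>
     distinct ps \<and> set (map (\<lambda>(x, y). {x, y}) ps) = M \<and> (\<forall>(x, y)\<in>set ps. precedes w x y)"

lemma set_is_listing:
  assumes d: "distinct w" and ps: "is_listing w M ps"
  shows "set ps = {(x, y). {x, y} \<in> M \<and> precedes w x y}"
proof (intro set_eqI iffI)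
  fix p
  assume "p \<in> {(x, y). {x, y} \<in> M \<and> precedes w x y}"
  then obtain a b where p: "p = (a, b)" "{a, b} \<in> M" "precedes w a b"
    by blast
  then obtain c e where ce: "(c, e) \<in> set ps" "{a, b} = {c, e}"
    using ps unfolding is_listing_def by auto
  then have "precedes w c e"
    using ps unfolding is_listing_def by auto
  then have "(c, e) = (a, b)"
    using ce(2) p(3) precedes_asym[OF d] by (auto simp: doubleton_eq_iff)
  then show "p \<in> set ps"
    using ce(1) p(1) by simp
qed (use ps in \<open>auto simp: is_listing_def\<close>)

lemma is_listing_exists:
  assumes d: "distinct w" and M: "M \<in> perfect_matchings (set w)"
  shows "\<exists>ps. is_listing w M ps"
proof -
  define P where "P = {(x, y). {x, y} \<in> M \<and> precedes w x y}"
  have "P \<subseteq> set w \<times> set w"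
    by (auto simp: P_def dest: precedes_imp_mem)
  then have "finite P"
    by (rule finite_subset) simp
  then obtain ps where ps: "distinct ps" "set ps = P"
    using finite_distinct_list by blast
  have "(\<lambda>(x, y). {x, y}) ` P = M"
  proof (intro set_eqI iffI)
    fix e
    assume e: "e \<in> M"
    then have "card e = 2"
      using M unfolding perfect_matchings_def by auto
    then obtain a b where ab: "e = {a, b}" "a \<noteq> b"
      by (meson card_2_iff)
    then have "precedes w a b \<or> precedes w b a"
      using precedes_total[OF d] perfect_matching_block_subset[OF M e] by auto
    then show "e \<in> (\<lambda>(x, y). {x, y}) ` P"
    proof
      assume "precedes w a b"
      then show ?thesis
        using e ab by (intro image_eqI[of _ _ "(a, b)"]) (simp_all add: P_def)
    next
      assume "precedes w b a"
      moreover have "e = {b, a}"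
        using ab by blast
      ultimately show ?thesis
        using e by (intro image_eqI[of _ _ "(b, a)"]) (simp_all add: P_def)
    qed
  qed (auto simp: P_def)
  moreover have "\<forall>(x, y)\<in>set ps. precedes w x y"
    using ps(2) by (auto simp: P_def)
  ultimately have "is_listing w M ps"
    using ps unfolding is_listing_def by simp
  then show ?thesis ..
qed

lemma is_listing_listing:
  assumes "distinct w" "M \<in> perfect_matchings (set w)"
  shows "is_listing w M (listing w M)"
  using someI_ex[OF is_listing_exists[OF assms]] unfolding listing_def is_listing_def .

lemma is_listing_mset_eq:
  assumes "distinct w" "is_listing w M ps" "is_listing w M qs"
  shows "mset ps = mset qs"
proof -
  have "set ps = set qs"
    using set_is_listing[OF assms(1,2)] set_is_listing[OF assms(1,3)] by simp
  then show ?thesis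
    using assms(2,3) unfolding is_listing_def by (simp add: set_eq_iff_mset_eq_distinct)
qed

lemma flat_Nil [simp]: "flat [] = []"
  by (simp add: flat_def)

lemma flat_Cons [simp]: "flat ((a, b) # ps) = a # b # flat ps"
  by (simp add: flat_def)

lemma flat_append [simp]: "flat (xs @ ys) = flat xs @ flat ys"
  by (simp add: flat_def)

lemma set_flat: "set (flat ps) = \<Union> ((\<lambda>(x, y). {x, y}) ` set ps)"
  by (induction ps) auto

lemma mset_flat: "mset (flat ps) = sum_mset (image_mset (\<lambda>(x, y). {#x, y#}) (mset ps))"
  by (induction ps) (auto simp: add_ac)

lemma distinct_flat:
  assumes "distinct ps" "\<forall>(a, b)\<in>set ps. a \<noteq> b"
    and "\<forall>p\<in>set ps. \<forall>q\<in>set ps. p \<noteq> q \<longrightarrow> (\<lambda>(x, y). {x, y}) p \<inter> (\<lambda>(x, y). {x, y}) q = {}"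
  shows "distinct (flat ps)"
  using assms
proof (induction ps)
  case (Cons p ps)
  obtain a b where p: "p = (a, b)"
    by (cases p)
  have "{a, b} \<inter> (\<lambda>(x, y). {x, y}) q = {}" if "q \<in> set ps" for q
    using Cons.prems(1,3) that p by (metis (no_types, lifting) case_prod_conv distinct.simps(2) list.set_intros)
  then have "a \<notin> set (flat ps)" "b \<notin> set (flat ps)"
    unfolding set_flat by blast+
  then show ?case
    using Cons p by simp
qed simp

lemma is_listing_flat:
  assumes d: "distinct w" and M: "M \<in> perfect_matchings (set w)" and ps: "is_listing w M ps"
  shows "distinct (flat ps)" "mset (flat ps) = mset w"
proof -
  have blocks: "(\<lambda>(x, y). {x, y}) ` set ps = M"
    using ps unfolding is_listing_def by simp
  have prec: "precedes w a b" if "(a, b) \<in> set ps" for a b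
    using ps that unfolding is_listing_def by auto
  have "distinct (flat ps)"
  proof (rule distinct_flat)
    show "distinct ps"
      using ps unfolding is_listing_def by simp
    show "\<forall>(a, b)\<in>set ps. a \<noteq> b"
      using prec precedes_imp_neq[OF d] by blast
    show "\<forall>p\<in>set ps. \<forall>q\<in>set ps. p \<noteq> q \<longrightarrow> (\<lambda>(x, y). {x, y}) p \<inter> (\<lambda>(x, y). {x, y}) q = {}"
    proof (intro ballI impI)
      fix p q
      assume pq: "p \<in> set ps" "q \<in> set ps" "p \<noteq> q"
      obtain a b c e where p: "p = (a, b)" and q: "q = (c, e)"
        by (cases p, cases q)
      have "precedes w a b" "precedes w c e"
        using prec pq p q by auto
      then have "{a, b} \<noteq> {c, e}"
        using pq(3) p q precedes_asym[OF d] by (auto simp: doubleton_eq_iff)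
      moreover have "{a, b} \<in> M" "{c, e} \<in> M"
        using blocks pq p q by force+
      ultimately show "(\<lambda>(x, y). {x, y}) p \<inter> (\<lambda>(x, y). {x, y}) q = {}"
        using M p q unfolding perfect_matchings_def by auto
    qed
  qed
  moreover have "set (flat ps) = set w"
    unfolding set_flat blocks using M unfolding perfect_matchings_def by auto
  ultimately show "distinct (flat ps)" "mset (flat ps) = mset w"
    using set_eq_iff_mset_eq_distinct d by blast+
qed

lemma wsign_flat_reorder:
  "distinct (flat ps) \<Longrightarrow> mset qs = mset ps \<Longrightarrow> wsign (flat ps) (flat qs) = (1::'r::comm_ring_1)"
proof (induction ps arbitrary: qs)
  case (Cons p ps)
  obtain a b where p: "p = (a, b)"
    by (cases p)
  obtain q1 q2 where qs: "qs = q1 @ p # q2"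
    using Cons.prems(2) by (metis list.set_intros(1) set_mset_mset split_list)
  define Q1 Q2 R where "Q1 = flat q1" and "Q2 = flat q2" and "R = flat ps"
  have m: "mset ps = mset (q1 @ q2)"
    using Cons.prems(2) qs by simp
  have dR: "distinct (a # b # R)"
    using Cons.prems(1) p R_def by simp
  have mR: "mset (Q1 @ Q2) = mset R"
    using m by (simp add: Q1_def Q2_def R_def mset_flat)
  have m1: "mset (a # b # Q1 @ Q2) = mset (a # b # R)" and m2: "mset (Q1 @ a # b # Q2) = mset (a # b # R)"
    using mR by simp_all
  have d1: "distinct (a # b # Q1 @ Q2)" and d2: "distinct (Q1 @ a # b # Q2)"
    using m1 m2 dR mset_eq_imp_distinct_iff by blast+
  have "wsign (a # b # R) (a # b # Q1 @ Q2) = (wsign (b # R) (b # Q1 @ Q2) :: 'r)"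
    using dR mR by (intro wsign_Cons) simp_all
  also have "\<dots> = wsign R (Q1 @ Q2)"
    using dR mR by (intro wsign_Cons) simp_all
  also have "\<dots> = 1"
    using Cons.IH[of "q1 @ q2"] dR m by (simp add: R_def Q1_def Q2_def)
  finally have front: "wsign (a # b # R) (a # b # Q1 @ Q2) = (1 :: 'r)" .
  have "wsign (Q1 @ a # b # Q2) (a # b # Q1 @ Q2) =
      wsign (Q1 @ a # b # Q2) (a # Q1 @ b # Q2) * (wsign (a # Q1 @ b # Q2) (a # b # Q1 @ Q2) :: 'r)"
    using d2 by (intro wsign_trans) (simp_all add: add_ac)
  also have "\<dots> = (-1)^length Q1 * (-1)^length Q1"
  proof -
    have "wsign (Q1 @ a # b # Q2) (a # Q1 @ b # Q2) = ((-1)^length Q1 :: 'r)"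
      using wsign_move_to_front[of "[]" Q1 a "b # Q2"] d2 by simp
    moreover have "wsign (a # Q1 @ b # Q2) (a # b # Q1 @ Q2) = ((-1)^length Q1 :: 'r)"
      using wsign_move_to_front[of "[a]" Q1 b Q2] d2 by simp
    ultimately show ?thesis
      by (simp only:)
  qed
  finally have rear: "wsign (Q1 @ a # b # Q2) (a # b # Q1 @ Q2) = (1 :: 'r)"
    by simp
  have "wsign (a # b # Q1 @ Q2) (a # b # Q1 @ Q2) =
      wsign (a # b # Q1 @ Q2) (Q1 @ a # b # Q2) * (wsign (Q1 @ a # b # Q2) (a # b # Q1 @ Q2) :: 'r)"
    using d1 by (intro wsign_trans) (simp_all add: add_ac)
  then have "wsign (a # b # Q1 @ Q2) (Q1 @ a # b # Q2) * wsign (Q1 @ a # b # Q2) (a # b # Q1 @ Q2) = (1 :: 'r)"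
    by (simp add: wsign_refl[OF d1])
  then have "wsign (a # b # Q1 @ Q2) (Q1 @ a # b # Q2) = (1 :: 'r)"
    unfolding rear by simp
  then have "wsign (a # b # R) (Q1 @ a # b # Q2) = (1 :: 'r)"
    using front by (simp add: wsign_trans[OF dR m1 m2])
  then show ?case
    using qs p by (simp add: Q1_def Q2_def R_def)
qed (simp add: wsign_refl)

definition matching_term :: "('a \<Rightarrow> 'a \<Rightarrow> 'r::comm_ring_1) \<Rightarrow> 'a list \<Rightarrow> ('a \<times> 'a) list \<Rightarrow> 'r" where
  "matching_term h w ps = wsign w (flat ps) * prod_list (map (\<lambda>(x, y). h x y) ps)"

(* listing picks the order of the blocks and of the pairs by SOME, so pf is well behaved only
   because its summand does not depend on that choice. *)
lemma matching_term_listing_independent: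
  fixes h :: "'a \<Rightarrow> 'a \<Rightarrow> 'r::comm_ring_1"
  assumes d: "distinct w" and M: "M \<in> perfect_matchings (set w)"
    and ps: "is_listing w M ps" and qs: "is_listing w M qs"
  shows "matching_term h w ps = matching_term h w qs"
proof -
  have m: "mset ps = mset qs"
    by (rule is_listing_mset_eq[OF d ps qs])
  have "prod_list (map (\<lambda>(x, y). h x y) ps) = prod_list (map (\<lambda>(x, y). h x y) qs)"
    by (metis m mset_map prod_mset_prod_list)
  moreover have "wsign w (flat qs) = wsign w (flat ps) * (wsign (flat ps) (flat qs) :: 'r)"
    using is_listing_flat[OF d M ps] is_listing_flat[OF d M qs] by (intro wsign_trans[OF d]) auto
  moreover have "wsign (flat ps) (flat qs) = (1 :: 'r)"
    using is_listing_flat[OF d M ps] m by (intro wsign_flat_reorder) auto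
  ultimately show ?thesis
    unfolding matching_term_def by simp
qed

lemma insert_perfect_matching:
  assumes d: "distinct (x # w)" and j: "j < length w" and M: "M \<in> perfect_matchings (set (remove_nth j w))"
  shows "insert {x, w ! j} M \<in> perfect_matchings (set (x # w))" "{x, w ! j} \<notin> M"
proof -
  have blocks: "e \<subseteq> set w - {w ! j}" if "e \<in> M" for e
    using M that set_remove_nth[of w j] d j unfolding perfect_matchings_def by auto
  have x: "x \<notin> set w" "x \<noteq> w ! j"
    using d j nth_mem by fastforce+
  show "{x, w ! j} \<notin> M"
    using blocks x by blast
  show "insert {x, w ! j} M \<in> perfect_matchings (set (x # w))"
    unfolding perfect_matchings_def
  proof (intro CollectI conjI ballI impI)
    show "card e = 2" if "e \<in> insert {x, w ! j} M" for e
      using that M x unfolding perfect_matchings_def by auto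
    show "\<Union> (insert {x, w ! j} M) = set (x # w)"
      using M set_remove_nth[of w j] d j unfolding perfect_matchings_def by auto
    show "e \<inter> e' = {}" if ee: "e \<in> insert {x, w ! j} M" "e' \<in> insert {x, w ! j} M" "e \<noteq> e'" for e e'
    proof (cases "e = {x, w ! j} \<or> e' = {x, w ! j}")
      case True
      then have "e \<in> M \<and> e' = {x, w ! j} \<or> e' \<in> M \<and> e = {x, w ! j}"
        using ee by auto
      then show ?thesis
        using blocks x by blast
    next
      case False
      then show ?thesis
        using ee M unfolding perfect_matchings_def by auto
    qed
  qed
qed

lemma perfect_matching_remove_block:
  assumes d: "distinct (x # w)" and M: "M \<in> perfect_matchings (set (x # w))"
  shows "\<exists>j<length w. \<exists>M'\<in>perfect_matchings (set (remove_nth j w)). M = insert {x, w ! j} M'"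
proof -
  have "x \<in> \<Union> M"
    using M unfolding perfect_matchings_def by auto
  then obtain e where e: "e \<in> M" "x \<in> e"
    by blast
  have "card e = 2"
    using M e unfolding perfect_matchings_def by auto
  then obtain y where y: "e = {x, y}" "x \<noteq> y"
    using e(2) by (metis card_2_iff insert_commute insertE singletonD)
  then have "y \<in> set w"
    using perfect_matching_block_subset[OF M e(1)] by auto
  then obtain j where j: "j < length w" "w ! j = y"
    by (metis in_set_conv_nth)
  have "M - {e} \<in> perfect_matchings (set (remove_nth j w))"
    unfolding perfect_matchings_def
  proof (intro CollectI conjI ballI impI)
    have "e' \<inter> e = {}" if "e' \<in> M - {e}" for e'
      using that M e(1) unfolding perfect_matchings_def by auto
    then have "\<Union> (M - {e}) = \<Union> M - e"
      by blast
    moreover have "\<Union> M = set (x # w)"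
      using M unfolding perfect_matchings_def by simp
    moreover have "set (remove_nth j w) = set w - {y}"
      using d j set_remove_nth[of w j] by simp
    ultimately show "\<Union> (M - {e}) = set (remove_nth j w)"
      using d y by auto
  qed (use M in \<open>auto simp: perfect_matchings_def\<close>)
  moreover have "M = insert {x, w ! j} (M - {e})"
    using e y j by auto
  ultimately show ?thesis
    using j by blast
qed

lemma sum_perfect_matchings_Cons:
  assumes d: "distinct (x # w)"
  shows "(\<Sum>M\<in>perfect_matchings (set (x # w)). F M) =
    (\<Sum>j<length w. \<Sum>M\<in>perfect_matchings (set (remove_nth j w)). F (insert {x, w ! j} M))"
proof -
  define I where "I = Sigma {..<length w} (\<lambda>j. perfect_matchings (set (remove_nth j w)))"
  define g where "g = (\<lambda>(j, M). insert {x, w ! j} M)"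
  have inj: "inj_on g I"
  proof (rule inj_onI, clarsimp simp: I_def g_def)
    fix i j M1 M2
    assume i: "i < length w" "M1 \<in> perfect_matchings (set (remove_nth i w))"
      and j: "j < length w" "M2 \<in> perfect_matchings (set (remove_nth j w))"
      and eq: "insert {x, w ! i} M1 = insert {x, w ! j} M2"
    have "\<Union> M2 = set (remove_nth j w)"
      using j(2) unfolding perfect_matchings_def by simp
    moreover have "x \<notin> set w"
      using d by simp
    ultimately have "{x, w ! i} \<notin> M2"
      using set_remove_nth_subset[of j w] by auto
    moreover have "{x, w ! i} \<in> insert {x, w ! j} M2"
      by (simp add: eq[symmetric])
    ultimately have "{x, w ! i} = {x, w ! j}"
      by simp
    then have "i = j"
      using d i j nth_eq_iff_index_eq[of w i j] nth_mem[of i w] by (auto simp: doubleton_eq_iff)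
    moreover have "{x, w ! j} \<notin> M1" "{x, w ! j} \<notin> M2"
      using insert_perfect_matching(2)[OF d] i j \<open>i = j\<close> by simp_all
    ultimately show "i = j \<and> M1 = M2"
      using eq insert_ident[of "{x, w ! j}" M1 M2] \<open>i = j\<close> by simp
  qed
  moreover have "g ` I = perfect_matchings (set (x # w))"
  proof
    show "g ` I \<subseteq> perfect_matchings (set (x # w))"
      using insert_perfect_matching(1)[OF d] by (auto simp: I_def g_def)
    show "perfect_matchings (set (x # w)) \<subseteq> g ` I"
    proof
      fix M
      assume "M \<in> perfect_matchings (set (x # w))"
      then obtain j M' where "j < length w" "M' \<in> perfect_matchings (set (remove_nth j w))"
        "M = insert {x, w ! j} M'"
        using perfect_matching_remove_block[OF d] by blast
      then show "M \<in> g ` I"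
        unfolding I_def g_def by (intro image_eqI[of _ _ "(j, M')"]) auto
    qed
  qed
  ultimately have "bij_betw g I (perfect_matchings (set (x # w)))"
    by (metis inj_on_imp_bij_betw)
  then have "(\<Sum>M\<in>perfect_matchings (set (x # w)). F M) = (\<Sum>p\<in>I. F (g p))"
    by (rule sum.reindex_bij_betw[symmetric])
  also have "\<dots> = (\<Sum>j<length w. \<Sum>M\<in>perfect_matchings (set (remove_nth j w)). F (insert {x, w ! j} M))"
    unfolding I_def g_def by (simp add: sum.Sigma finite_perfect_matchings split_def)
  finally show ?thesis .
qed

lemma is_listing_Cons:
  assumes d: "distinct (x # w)" and j: "j < length w"
    and ps: "is_listing (remove_nth j w) M ps"
  shows "is_listing (x # w) (insert {x, w ! j} M) ((x, w ! j) # ps)"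
proof -
  have "x \<notin> set (remove_nth j w)"
    using d j set_remove_nth[of w j] by auto
  then have "(x, w ! j) \<notin> set ps"
    using ps precedes_imp_mem unfolding is_listing_def by fastforce
  moreover have "precedes (x # w) a b" if "(a, b) \<in> set ps" for a b
    using that ps precedes_Cons_remove_nth[OF _ j] unfolding is_listing_def by blast
  ultimately show ?thesis
    using ps precedes_Cons_nth[OF j] unfolding is_listing_def by auto
qed

lemma matching_term_insert:
  assumes d: "distinct (x # w)" and j: "j < length w" and M: "M \<in> perfect_matchings (set (remove_nth j w))"
  shows "matching_term h (x # w) (listing (x # w) (insert {x, w ! j} M)) =
    (-1)^j * h x (w ! j) * matching_term h (remove_nth j w) (listing (remove_nth j w) M)"
proof -
  have dr: "distinct (remove_nth j w)"
    using d by (simp add: distinct_remove_nth)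
  define ps where "ps = listing (remove_nth j w) M"
  have ps: "is_listing (remove_nth j w) M ps"
    unfolding ps_def by (rule is_listing_listing[OF dr M])
  have "matching_term h (x # w) (listing (x # w) (insert {x, w ! j} M)) = matching_term h (x # w) ((x, w ! j) # ps)"
    using insert_perfect_matching(1)[OF d j M] is_listing_listing[OF d] is_listing_Cons[OF d j ps]
    by (intro matching_term_listing_independent[OF d])
  also have "\<dots> = (-1)^j * wsign (remove_nth j w) (flat ps) * (h x (w ! j) * prod_list (map (\<lambda>(x, y). h x y) ps))"
    unfolding matching_term_def by (simp add: wsign_Cons_nth_Cons[OF d j is_listing_flat(2)[OF dr M ps]])
  finally show ?thesis
    unfolding matching_term_def ps_def by (simp only: ac_simps)
qed

lemma pf_eq_sum_matching_term:
  assumes "distinct w" "even (length w)"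
  shows "pf h w = (\<Sum>M\<in>perfect_matchings (set w). matching_term h w (listing w M))"
proof (cases "w = []")
  case True
  have "is_listing [] {} (listing [] {} :: ('a \<times> 'a) list)"
    by (rule is_listing_listing) (simp_all add: perfect_matchings_empty)
  then have "listing [] {} = ([] :: ('a \<times> 'a) list)"
    unfolding is_listing_def by auto
  then show ?thesis
    using True by (simp add: perfect_matchings_empty pf_def matching_term_def wsign_refl)
next
  case False
  then show ?thesis
    unfolding pf_def matching_term_def using assms by simp
qed

lemma pf_eq_pf_rec: "distinct w \<Longrightarrow> pf h w = pf_rec h w"
proof (induction "length w" arbitrary: w rule: less_induct)
  case less
  show ?case
  proof (cases w)
    case Nil
    then show ?thesis
      by (simp add: pf_def)
  next
    case (Cons x w')
    show ?thesis
    proof (cases "even (length w)")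
      case False
      then show ?thesis
        using pf_rec_odd[OF False] Cons unfolding pf_def by simp
    next
      case True
      have d: "distinct (x # w')"
        using less.prems Cons by simp
      have partner_sum: "(\<Sum>M\<in>perfect_matchings (set (remove_nth j w')).
          matching_term h (x # w') (listing (x # w') (insert {x, w' ! j} M))) =
        (-1)^j * h x (w' ! j) * pf_rec h (remove_nth j w')" if j: "j < length w'" for j
      proof -
        have dr: "distinct (remove_nth j w')" and ev: "even (length (remove_nth j w'))"
          using d True Cons j by (simp_all add: distinct_remove_nth)
        have "(\<Sum>M\<in>perfect_matchings (set (remove_nth j w')).
            matching_term h (x # w') (listing (x # w') (insert {x, w' ! j} M))) =
          (-1)^j * h x (w' ! j) * pf h (remove_nth j w')"
          unfolding pf_eq_sum_matching_term[OF dr ev] sum_distrib_left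
          by (rule sum.cong) (simp_all add: matching_term_insert[OF d j])
        also have "pf h (remove_nth j w') = pf_rec h (remove_nth j w')"
          using less.hyps[of "remove_nth j w'"] dr Cons j by simp
        finally show ?thesis .
      qed
      have "pf h w = (\<Sum>M\<in>perfect_matchings (set (x # w')). matching_term h (x # w') (listing (x # w') M))"
        using pf_eq_sum_matching_term[OF less.prems True] Cons by simp
      also have "\<dots> = (\<Sum>j<length w'. (-1)^j * h x (w' ! j) * pf_rec h (remove_nth j w'))"
        unfolding sum_perfect_matchings_Cons[OF d] by (rule sum.cong) (simp_all add: partner_sum)
      also have "\<dots> = pf_rec h w"
        unfolding Cons by (simp add: pf_rec.simps(2))
      finally show ?thesis .
    qed
  qed
qed

theorem mainTheorem4:
  fixes f :: "'a \<Rightarrow> 'a \<Rightarrow> 'r::comm_ring_1"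
    and \<alpha> \<beta> :: "'a list" and n :: nat
  assumes antisym: "\<And>x y. f x y = - f y x"
    and diag: "\<And>x. f x x = 0"
    and dist: "distinct (\<alpha> @ \<beta>)"
    and ev: "even (length \<alpha>)"
    and len: "length \<beta> = 2 * n"
    and n1: "n \<ge> 1"
  shows "pf f \<alpha> * pf f (\<alpha> @ \<beta>) ^ (n - 1) =
    (\<Sum>M\<in>perfect_matchings (set \<beta>).
        wsign \<beta> (flat (listing \<beta> M)) *
        prod_list (map (\<lambda>(x,y). pf f (wminus (\<alpha> @ \<beta>) [x,y])) (listing \<beta> M)))"
proof -
  interpret skew_form f
    by unfold_locales (rule alternatingI[OF antisym diag])
  define C where "C = \<alpha> @ \<beta>"
  have dC: "distinct C" and d\<alpha>: "distinct \<alpha>" and d\<beta>: "distinct \<beta>"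
    using dist by (simp_all add: C_def)
  have sub: "filter (\<lambda>z. z \<in> set \<beta>) C = \<beta>" and C_minus_\<beta>: "wminus C \<beta> = \<alpha>"
    using dist by (auto simp: C_def wminus_def filter_empty_conv intro: filter_True)
  have pair_pf: "pf f (wminus C [x, y]) = pf_rec f (wminus C [x, y])" for x y
    using dC by (intro pf_eq_pf_rec) (simp add: wminus_def)
  have "pf f \<alpha> * pf f C ^ (n - 1) = pf_rec f (wminus C \<beta>) * pf_rec f C ^ (n - 1)"
    by (simp add: pf_eq_pf_rec[OF d\<alpha>] pf_eq_pf_rec[OF dC] C_minus_\<beta>)
  also have "\<dots> = pf_rec (\<lambda>x y. pf_rec f (wminus C [x, y])) \<beta>"
    by (rule pf_rec_wminus_power[OF dC sub len n1])
  also have "\<dots> = pf (\<lambda>x y. pf f (wminus C [x, y])) \<beta>"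
    by (simp add: pf_eq_pf_rec[OF d\<beta>] pair_pf)
  finally show ?thesis
    using d\<beta> len n1 unfolding pf_def C_def by auto
qed

end
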